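(* Let $D=D_F$ be a $\tau$-admissible Bregman divergence on an open convex domain $\mathcal{X}\subseteq\mathbb{R}^d$ and let $0<\varepsilon\le 1$. Let $w\subseteq\mathcal{X}$ be a set and $B_w\subseteq\mathcal{X}$ a Euclidean ball with $\mathrm{dist}(B_w,w)\ge\beta\cdot\mathrm{diam}(B_w)$, where $\beta\ge 4\tau^2/\varepsilon$. Then for any $q\in w$ and any $p,p'\in B_w$, $\dfrac{|D(q,p)-D(q,p')|}{D(q,p)}\le\varepsilon$.
   Context: $F$ is strictly convex and twice differentiable on $\mathcal{X}$ and $D_F(q,p)=F(q)-F(p)-\langle\nabla F(p),q-p\rangle$. For a site $p$, $f_p(x)=D_F(x,p)$ with derivatives in $x$. $D_F$ is $\tau$-admissible if for all $p,x\in\mathcal{X}$: $\|\nabla f_p(x)\|\,\|x-p\|\le\tau f_p(x)$ and $\|\nabla^2 f_p(x)\|\,\|x-p\|^2\le\tau^2 f_p(x)$ (Euclidean/spectral norms). $\mathrm{dist}$ denotes minimum Euclidean distance between sets. (In the paper, $w$ is a leaf cell of a BBD-tree decomposition and $B_w$ its inner-cluster ball; only the stated separation property is used.) *)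

theory Defs
  imports "HOL-Analysis.Analysis"
begin

definition strictly_convex_on :: "'a::real_vector set \<Rightarrow> ('a \<Rightarrow> real) \<Rightarrow> bool" where
  "strictly_convex_on S f \<longleftrightarrow> convex S \<and>
     (\<forall>x\<in>S. \<forall>y\<in>S. x \<noteq> y \<longrightarrow> (\<forall>u::real. 0 < u \<and> u < 1 \<longrightarrow>
        f ((1 - u) *\<^sub>R x + u *\<^sub>R y) < (1 - u) * f x + u * f y))"

text \<open>F is twice differentiable on X with gradient gradF and Hessian hessF
  (hessF x is the linear map h |-> Hessian(x) h, the derivative of gradF at x).\<close>
definition twice_diff_grad_hess ::
  "'a::euclidean_space set \<Rightarrow> ('a \<Rightarrow> real) \<Rightarrow> ('a \<Rightarrow> 'a) \<Rightarrow> ('a \<Rightarrow> 'a \<Rightarrow> 'a) \<Rightarrow> bool" where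
  "twice_diff_grad_hess X F gradF hessF \<longleftrightarrow>
     (\<forall>x\<in>X. (F has_derivative (\<lambda>h. gradF x \<bullet> h)) (at x) \<and>
             (gradF has_derivative hessF x) (at x))"

definition bregman :: "('a::euclidean_space \<Rightarrow> real) \<Rightarrow> ('a \<Rightarrow> 'a) \<Rightarrow> 'a \<Rightarrow> 'a \<Rightarrow> real" where
  "bregman F gradF q p = F q - F p - gradF p \<bullet> (q - p)"

text \<open>tau-admissibility. For f_p(x) = D_F(x,p) one has grad f_p(x) = grad F(x) - grad F(p)
  and Hessian f_p(x) = Hessian F(x); the spectral norm of the (symmetric) Hessian is the
  operator norm onorm.\<close>
definition tau_admissible ::
  "real \<Rightarrow> 'a::euclidean_space set \<Rightarrow> ('a \<Rightarrow> real) \<Rightarrow> ('a \<Rightarrow> 'a) \<Rightarrow> ('a \<Rightarrow> 'a \<Rightarrow> 'a) \<Rightarrow> bool" where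
  "tau_admissible \<tau> X F gradF hessF \<longleftrightarrow>
     (\<forall>p\<in>X. \<forall>x\<in>X.
        norm (gradF x - gradF p) * norm (x - p) \<le> \<tau> * bregman F gradF x p \<and>
        onorm (hessF x) * (norm (x - p))\<^sup>2 \<le> \<tau>\<^sup>2 * bregman F gradF x p)"

end

theory Submission
  imports Defs
begin

text \<open>Move the second argument of the divergence along the segment from \<open>p\<close> to \<open>p'\<close>:
  \<open>h t = D(q, p + t v)\<close> has derivative \<open>-\<langle>\<nabla>\<^sup>2F(x) v, q - x\<rangle>\<close>. Admissibility only controls
  the Hessian at the \<^emph>\<open>first\<close> argument of \<open>D\<close>, but comparing \<open>D(x, y)\<close> for two points \<open>y\<close>
  between \<open>x\<close> and \<open>q\<close> with \<open>D(q, x)\<close> still gives \<open>\<parallel>\<nabla>\<^sup>2F(x)\<parallel> \<parallel>q - x\<parallel>\<^sup>2 \<le> 27/10 \<tau>\<^sup>2 D(q, x)\<close>.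
  Since \<open>q\<close> is at distance at least \<open>4\<tau>\<^sup>2/\<epsilon> \<parallel>v\<parallel>\<close> from the segment, this yields
  \<open>|h'| \<le> 27/40 \<epsilon> h\<close>, and Gronwall's inequality confines \<open>h 1 / h 0\<close> to
  \<open>[exp (-27/40 \<epsilon>), exp (27/40 \<epsilon>)] \<subseteq> [1 - \<epsilon>, 1 + \<epsilon>]\<close>.\<close>

lemma strictly_convex_on_imp_convex_on:
  assumes "strictly_convex_on X F"
  shows "convex_on X F"
proof (rule convex_onI)
  show "convex X" using assms unfolding strictly_convex_on_def by simp
  fix t :: real and x y assume "0 < t" "t < 1" "x \<in> X" "y \<in> X"
  then show "F ((1 - t) *\<^sub>R x + t *\<^sub>R y) \<le> (1 - t) * F x + t * F y"
    using assms unfolding strictly_convex_on_def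
    by (cases "x = y") (auto simp: algebra_simps less_imp_le)
qed

lemma convex_on_line:
  assumes "convex_on X F"
  shows "convex_on {u. x + u *\<^sub>R d \<in> X} (\<lambda>u. F (x + u *\<^sub>R d))"
proof -
  have affine: "(1 - t) *\<^sub>R (x + a *\<^sub>R d) + t *\<^sub>R (x + b *\<^sub>R d) = x + ((1 - t) * a + t * b) *\<^sub>R d"
    for a b t :: real by (simp add: algebra_simps)
  have "convex X" using assms by (rule convex_on_imp_convex)
  show ?thesis
  proof (rule convex_onI)
    show "convex {u. x + u *\<^sub>R d \<in> X}"
      using \<open>convex X\<close> unfolding convex_alt by (auto simp flip: affine)
    fix t a b :: real assume "0 < t" "t < 1" "a \<in> {u. x + u *\<^sub>R d \<in> X}" "b \<in> {u. x + u *\<^sub>R d \<in> X}"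
    then show "F (x + ((1 - t) *\<^sub>R a + t *\<^sub>R b) *\<^sub>R d) \<le> (1 - t) * F (x + a *\<^sub>R d) + t * F (x + b *\<^sub>R d)"
      using convex_onD[OF assms, of t "x + a *\<^sub>R d" "x + b *\<^sub>R d"] by (simp add: affine)
  qed
qed

lemma convex_on_gradient_inequality:
  fixes F :: "'a::real_normed_vector \<Rightarrow> real"
  assumes "convex_on X F" "open X" "x \<in> X" "y \<in> X"
    and "(F has_derivative F') (at x)"
  shows "F' (y - x) \<le> F y - F x"
proof -
  define d where "d = y - x"
  define A where "A = {u::real. x + u *\<^sub>R d \<in> X}"
  have "open A" unfolding A_def
    by (intro open_vimage[of X "\<lambda>u. x + u *\<^sub>R d", unfolded vimage_def] assms(2) continuous_intros)
  moreover have "convex_on A (\<lambda>u. F (x + u *\<^sub>R d))"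
    unfolding A_def by (rule convex_on_line[OF assms(1)])
  moreover have "0 \<in> A" "1 \<in> A" using assms(3,4) unfolding A_def d_def by auto
  moreover have "((\<lambda>u. F (x + u *\<^sub>R d)) has_field_derivative F' d) (at 0 within A)"
  proof -
    have "((\<lambda>u. x + u *\<^sub>R d) has_derivative (\<lambda>u. u *\<^sub>R d)) (at 0)"
      by (auto intro!: derivative_eq_intros)
    moreover have "(F has_derivative F') (at (x + 0 *\<^sub>R d))" using assms(5) by simp
    ultimately have "((\<lambda>u. F (x + u *\<^sub>R d)) has_derivative (\<lambda>u. F' (u *\<^sub>R d))) (at 0)"
      by (rule has_derivative_compose)
    moreover have "F' (u *\<^sub>R d) = F' d * u" for u
      using linear_scale[OF has_derivative_linear[OF assms(5)]] by simp
    ultimately show ?thesis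
      unfolding has_field_derivative_def by (auto intro: has_derivative_at_withinI)
  qed
  ultimately have "F' d * (1 - 0) \<le> F (x + 1 *\<^sub>R d) - F (x + 0 *\<^sub>R d)"
    by (intro convex_on_imp_above_tangent convex_connected convex_on_imp_convex) (auto simp: interior_open)
  then show ?thesis unfolding d_def by simp
qed

lemma bregman_nonneg:
  assumes "convex_on X F" "open X" "x \<in> X" "y \<in> X"
    and "(F has_derivative (\<lambda>h. gradF x \<bullet> h)) (at x)"
  shows "0 \<le> bregman F gradF y x"
  using convex_on_gradient_inequality[OF assms] unfolding bregman_def by simp

lemma bregman_on_line:
  "bregman F gradF (p + a *\<^sub>R u) (p + b *\<^sub>R u)
     = F (p + a *\<^sub>R u) - F (p + b *\<^sub>R u) - (a - b) * (gradF (p + b *\<^sub>R u) \<bullet> u)"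
proof -
  have "(p + a *\<^sub>R u) - (p + b *\<^sub>R u) = (a - b) *\<^sub>R u" by (simp add: algebra_simps)
  then show ?thesis unfolding bregman_def by simp
qed

lemma bregman_three_point_identity:
  fixes p u :: "'a::euclidean_space"
  defines "y t \<equiv> p + t *\<^sub>R u"
  shows "2 * bregman F gradF (y 1) (y 0) - 8/3 * bregman F gradF (y 0) (y (1/3))
      - bregman F gradF (y 0) (y (2/3))
    = 2 * bregman F gradF (y 1) (y (2/3)) + 8/3 * bregman F gradF (y (2/3)) (y (1/3))
      + 16/3 * bregman F gradF (y (1/3)) (y 0) + 1/3 * bregman F gradF (y (2/3)) (y 0)"
  unfolding y_def bregman_on_line by (simp add: algebra_simps)

lemma onorm_hess_le_bregman:
  assumes "convex_on X F" "open X"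
    and grad: "\<And>z. z \<in> X \<Longrightarrow> (F has_derivative (\<lambda>h. gradF z \<bullet> h)) (at z)"
    and adm: "tau_admissible \<tau> X F gradF hessF" and "p \<in> X" "q \<in> X"
  shows "onorm (hessF p) * (norm (q - p))\<^sup>2 \<le> 27/10 * \<tau>\<^sup>2 * bregman F gradF q p"
proof -
  define u where "u = q - p"
  define y where "y t = p + t *\<^sub>R u" for t :: real
  have y_in: "y t \<in> X" if "0 \<le> t" "t \<le> 1" for t
  proof -
    have "y t = (1 - t) *\<^sub>R p + t *\<^sub>R q" unfolding y_def u_def by (simp add: algebra_simps)
    then show ?thesis
      using convex_on_imp_convex[OF assms(1)] assms(5,6) that unfolding convex_alt by simp
  qed
  have y_ends: "y 0 = p" "y 1 = q" unfolding y_def u_def by simp_all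
  let ?D = "bregman F gradF"
  have nonneg: "0 \<le> ?D (y s) (y t)" if "s \<in> {0..1}" "t \<in> {0..1}" for s t
    using that by (intro bregman_nonneg[OF assms(1,2)] grad y_in) auto
  have hess_at_p: "onorm (hessF p) * (t * norm u)\<^sup>2 \<le> \<tau>\<^sup>2 * ?D p (y t)" if "0 \<le> t" "t \<le> 1" for t
  proof -
    have "norm (p - y t) = t * norm u" unfolding y_def using that by simp
    then show ?thesis using adm assms(5) y_in[OF that] unfolding tau_admissible_def by metis
  qed
  have "onorm (hessF p) * (norm u)\<^sup>2 * (20/27)
      = 8/3 * (onorm (hessF p) * (1/3 * norm u)\<^sup>2) + onorm (hessF p) * (2/3 * norm u)\<^sup>2"
    by (simp add: power2_eq_square algebra_simps)
  also have "\<dots> \<le> \<tau>\<^sup>2 * (8/3 * ?D p (y (1/3)) + ?D p (y (2/3)))"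
    using hess_at_p[of "1/3"] hess_at_p[of "2/3"] by (simp add: algebra_simps)
  also have "\<dots> \<le> \<tau>\<^sup>2 * (2 * ?D q p)"
  proof (rule mult_left_mono)
    show "8/3 * ?D p (y (1/3)) + ?D p (y (2/3)) \<le> 2 * ?D q p"
      using bregman_three_point_identity[of F gradF p u] nonneg[of 1 "2/3"] nonneg[of "2/3" "1/3"]
        nonneg[of "1/3" 0] nonneg[of "2/3" 0]
      unfolding y_def[symmetric] y_ends by simp
  qed simp
  finally show ?thesis unfolding u_def by linarith
qed

lemma has_real_derivative_bregman_line:
  assumes "(F has_derivative (\<lambda>h. gradF x \<bullet> h)) (at x)"
    and "(gradF has_derivative hessF x) (at x)"
    and "x = p + t *\<^sub>R v"
  shows "((\<lambda>s. bregman F gradF q (p + s *\<^sub>R v)) has_real_derivative - (hessF x v \<bullet> (q - x))) (at t)"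
proof -
  have line: "((\<lambda>s. p + s *\<^sub>R v) has_derivative (\<lambda>s. s *\<^sub>R v)) (at t)"
    by (auto intro!: derivative_eq_intros)
  have "((\<lambda>s. F (p + s *\<^sub>R v)) has_derivative (\<lambda>s. gradF x \<bullet> (s *\<^sub>R v))) (at t)"
    by (rule has_derivative_compose[OF line, folded assms(3), OF assms(1)])
  moreover have "((\<lambda>s. gradF (p + s *\<^sub>R v)) has_derivative (\<lambda>s. hessF x (s *\<^sub>R v))) (at t)"
    by (rule has_derivative_compose[OF line, folded assms(3), OF assms(2)])
  ultimately have deriv: "((\<lambda>s. bregman F gradF q (p + s *\<^sub>R v)) has_derivative
      (\<lambda>s. - (gradF x \<bullet> (s *\<^sub>R v)) - (gradF x \<bullet> - (s *\<^sub>R v) + hessF x (s *\<^sub>R v) \<bullet> (q - x)))) (at t)"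
    unfolding bregman_def using assms(3) by (auto intro!: derivative_eq_intros)
  have "hessF x (s *\<^sub>R v) = s *\<^sub>R hessF x v" for s
    using linear_scale[OF has_derivative_linear[OF assms(2)]] .
  then have "(\<lambda>s. - (gradF x \<bullet> (s *\<^sub>R v)) - (gradF x \<bullet> - (s *\<^sub>R v) + hessF x (s *\<^sub>R v) \<bullet> (q - x)))
      = (*) (- (hessF x v \<bullet> (q - x)))"
    by (simp add: fun_eq_iff)
  then show ?thesis using deriv unfolding has_field_derivative_def by simp
qed

lemma exp_growth_bound:
  fixes h h' :: "real \<Rightarrow> real"
  assumes "a \<le> b"
    and deriv: "\<And>t. a \<le> t \<Longrightarrow> t \<le> b \<Longrightarrow> (h has_real_derivative h' t) (at t)"
    and growth: "\<And>t. a \<le> t \<Longrightarrow> t \<le> b \<Longrightarrow> h' t \<le> K * h t"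
  shows "h b \<le> exp (K * (b - a)) * h a"
proof -
  define g where "g t = exp (- K * t) * h t" for t
  have "g b \<le> g a"
  proof (rule DERIV_nonpos_imp_nonincreasing[OF \<open>a \<le> b\<close>])
    fix t assume t: "a \<le> t" "t \<le> b"
    have "(g has_real_derivative exp (- K * t) * (h' t - K * h t)) (at t)"
      unfolding g_def by (auto intro!: derivative_eq_intros deriv[OF t] simp: algebra_simps)
    moreover have "exp (- K * t) * (h' t - K * h t) \<le> 0"
      using growth[OF t] by (simp add: mult_nonneg_nonpos)
    ultimately show "\<exists>y. (g has_real_derivative y) (at t) \<and> y \<le> 0" by blast
  qed
  then have "exp (K * b) * (exp (- K * b) * h b) \<le> exp (K * b) * (exp (- K * a) * h a)"
    unfolding g_def by (rule mult_left_mono) simp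
  then show ?thesis
    by (simp only: mult.assoc[symmetric] exp_add[symmetric]) (simp add: algebra_simps)
qed

lemma exp_27_40_le:
  assumes "0 \<le> \<epsilon>" "\<epsilon> \<le> (1::real)"
  shows "exp (27/40 * \<epsilon>) \<le> 1 + \<epsilon>"
proof -
  have "exp (27/640::real) \<le> 1 + 27/640 + (27/640)\<^sup>2" by (rule exp_bound) auto
  then have "exp (27/640::real) ^ 16 \<le> (1 + 27/640 + (27/640)\<^sup>2) ^ 16"
    by (rule power_mono) simp
  also have "\<dots> \<le> (2::real)" by (simp add: power2_eq_square power_divide)
  finally have "exp (27/40::real) \<le> 2" by (simp flip: exp_of_nat_mult)
  have "exp ((1 - \<epsilon>) *\<^sub>R 0 + \<epsilon> *\<^sub>R (27/40)) \<le> (1 - \<epsilon>) * exp 0 + \<epsilon> * exp (27/40)"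
    using assms by (intro convex_onD[OF exp_convex]) auto
  also have "\<dots> \<le> 1 + \<epsilon>"
    using mult_left_mono[OF \<open>exp (27/40) \<le> 2\<close> assms(1)] by simp
  finally show ?thesis by (simp add: mult.commute)
qed

lemma hess_inner_le_bregman:
  assumes "convex_on X F" "open X"
    and grad: "\<And>z. z \<in> X \<Longrightarrow> (F has_derivative (\<lambda>h. gradF z \<bullet> h)) (at z)"
    and "bounded_linear (hessF x)" and "tau_admissible \<tau> X F gradF hessF"
    and "x \<in> X" "q \<in> X" "0 \<le> \<epsilon>"
    and sep: "4 * \<tau>\<^sup>2 * norm v \<le> \<epsilon> * norm (q - x)"
  shows "\<bar>hessF x v \<bullet> (q - x)\<bar> \<le> 27/40 * \<epsilon> * bregman F gradF q x"
proof -
  define D where "D = bregman F gradF q x"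
  define a where "a = onorm (hessF x)"
  define n where "n = norm v"
  define d where "d = norm (q - x)"
  have "0 \<le> D" unfolding D_def by (rule bregman_nonneg[where gradF = gradF, OF assms(1,2,6,7) grad[OF assms(6)]])
  have "\<bar>hessF x v \<bullet> (q - x)\<bar> \<le> norm (hessF x v) * d"
    unfolding d_def by (rule Cauchy_Schwarz_ineq2)
  also have "\<dots> \<le> a * n * d"
    unfolding a_def n_def d_def by (intro mult_right_mono onorm assms(4)) simp
  finally have CS: "\<bar>hessF x v \<bullet> (q - x)\<bar> \<le> a * n * d" .
  show ?thesis
  proof (cases "d = 0")
    case True
    then show ?thesis using CS \<open>0 \<le> D\<close> \<open>0 \<le> \<epsilon>\<close> unfolding D_def by simp
  next
    case False
    then have "0 < d" unfolding d_def by simp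
    have "(a * n * d) * d = (a * d\<^sup>2) * n" by (simp add: power2_eq_square)
    also have "\<dots> \<le> (27/10 * \<tau>\<^sup>2 * D) * n"
    proof (rule mult_right_mono)
      show "a * d\<^sup>2 \<le> 27/10 * \<tau>\<^sup>2 * D"
        unfolding a_def d_def D_def by (rule onorm_hess_le_bregman[OF assms(1,2) grad assms(5-7)])
    qed (simp add: n_def)
    also have "\<dots> = 27/40 * D * (4 * \<tau>\<^sup>2 * n)" by simp
    also have "\<dots> \<le> 27/40 * D * (\<epsilon> * d)"
      using sep \<open>0 \<le> D\<close> unfolding n_def d_def by (intro mult_left_mono) simp_all
    finally have "a * n * d \<le> 27/40 * \<epsilon> * D"
      using \<open>0 < d\<close> by (simp add: mult.commute mult.left_commute)
    then show ?thesis using CS unfolding D_def by linarith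
  qed
qed

lemma bregman_relative_change_on_segment:
  assumes "convex_on X F" "open X" and twice: "twice_diff_grad_hess X F gradF hessF"
    and adm: "tau_admissible \<tau> X F gradF hessF"
    and "0 \<le> \<epsilon>" "\<epsilon> \<le> 1" "q \<in> X" and seg: "closed_segment p p' \<subseteq> X"
    and sep: "\<And>x. x \<in> closed_segment p p' \<Longrightarrow> 4 * \<tau>\<^sup>2 * norm (p' - p) \<le> \<epsilon> * norm (q - x)"
  shows "\<bar>bregman F gradF q p - bregman F gradF q p'\<bar> \<le> \<epsilon> * bregman F gradF q p"
proof -
  have grad: "\<And>z. z \<in> X \<Longrightarrow> (F has_derivative (\<lambda>h. gradF z \<bullet> h)) (at z)"
    and hess: "\<And>z. z \<in> X \<Longrightarrow> (gradF has_derivative hessF z) (at z)"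
    using twice unfolding twice_diff_grad_hess_def by auto
  define v where "v = p' - p"
  define x where "x t = p + t *\<^sub>R v" for t
  define h where "h t = bregman F gradF q (x t)" for t
  define h' where "h' t = - (hessF (x t) v \<bullet> (q - x t))" for t
  define K where "K = 27/40 * \<epsilon>"
  have x_seg: "x t \<in> closed_segment p p'" if "0 \<le> t" "t \<le> 1" for t
    unfolding in_segment x_def v_def using that by (intro exI[of _ t]) (simp add: algebra_simps)
  have deriv: "(h has_real_derivative h' t) (at t)" if "0 \<le> t" "t \<le> 1" for t
    using x_seg[OF that] seg unfolding h_def h'_def x_def
    by (intro has_real_derivative_bregman_line grad hess) auto
  have bound: "\<bar>h' t\<bar> \<le> K * h t" if "0 \<le> t" "t \<le> 1" for t
  proof -
    have "x t \<in> X" using x_seg[OF that] seg by auto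
    then have "\<bar>hessF (x t) v \<bullet> (q - x t)\<bar> \<le> K * h t"
      unfolding h_def K_def using sep[OF x_seg[OF that]]
      by (intro hess_inner_le_bregman[OF assms(1,2) grad _ adm _ \<open>q \<in> X\<close> \<open>0 \<le> \<epsilon>\<close>]
          has_derivative_bounded_linear[OF hess]) (simp_all add: v_def)
    then show ?thesis by (simp add: h'_def)
  qed
  have forward: "h 1 \<le> exp K * h 0"
    using exp_growth_bound[of 0 1 h h' K] deriv bound by fastforce
  have backward: "h 0 \<le> exp K * h 1"
  proof -
    have "(\<lambda>t. h (- t)) 0 \<le> exp (K * (0 - -1)) * (\<lambda>t. h (- t)) (-1)"
    proof (rule exp_growth_bound[where h' = "\<lambda>t. - h' (- t)"])
      fix t :: real assume "-1 \<le> t" "t \<le> 0"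
      then show "((\<lambda>t. h (- t)) has_real_derivative - h' (- t)) (at t)"
        using deriv[of "- t"] DERIV_mirror by simp
      show "- h' (- t) \<le> K * h (- t)" using bound[of "- t"] \<open>-1 \<le> t\<close> \<open>t \<le> 0\<close> by simp
    qed simp
    then show ?thesis by simp
  qed
  have "0 \<le> h 0" "0 \<le> h 1"
    unfolding h_def using x_seg[of 0] x_seg[of 1] seg \<open>q \<in> X\<close>
    by (auto intro!: bregman_nonneg[OF assms(1,2)] grad)
  moreover have "exp K \<le> 1 + \<epsilon>" unfolding K_def using assms(5,6) by (rule exp_27_40_le)
  ultimately have "h 1 \<le> (1 + \<epsilon>) * h 0" "h 0 \<le> (1 + \<epsilon>) * h 1"
    using forward backward by (meson mult_right_mono order_trans)+
  moreover have "(1 - \<epsilon>) * ((1 + \<epsilon>) * h 1) \<le> h 1"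
    using \<open>0 \<le> h 1\<close> \<open>0 \<le> \<epsilon>\<close> by (simp add: algebra_simps power2_eq_square[symmetric])
  ultimately have "(1 - \<epsilon>) * h 0 \<le> h 1"
    using mult_left_mono[of "h 0" "(1 + \<epsilon>) * h 1" "1 - \<epsilon>"] assms(6) by linarith
  then show ?thesis
    using \<open>h 1 \<le> (1 + \<epsilon>) * h 0\<close> unfolding h_def x_def v_def by (simp add: algebra_simps abs_le_iff)
qed

lemma scaled_dist_le_dist_of_setdist:
  assumes "bounded B" "p \<in> B" "p' \<in> B" "x \<in> B" "q \<in> w"
    and "0 \<le> \<beta>" "\<beta> * diameter B \<le> setdist B w"
  shows "\<beta> * dist p p' \<le> dist x q"
proof -
  have "\<beta> * dist p p' \<le> \<beta> * diameter B"
    using diameter_bounded_bound[OF assms(1-3)] assms(6) by (rule mult_left_mono)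
  also have "\<dots> \<le> dist x q" using assms(7) setdist_le_dist[OF assms(4,5)] by linarith
  finally show ?thesis .
qed

theorem lemma9:
  fixes X :: "'a::euclidean_space set" and F :: "'a \<Rightarrow> real"
    and gradF :: "'a \<Rightarrow> 'a" and hessF :: "'a \<Rightarrow> 'a \<Rightarrow> 'a"
    and \<tau> \<epsilon> \<beta> r :: real and c :: 'a and w B :: "'a set"
  assumes "open X" and "convex X"
    and "strictly_convex_on X F"
    and "twice_diff_grad_hess X F gradF hessF"
    and "tau_admissible \<tau> X F gradF hessF"
    and "0 < \<epsilon>" and "\<epsilon> \<le> 1"
    and "w \<subseteq> X"
    and "B = ball c r \<or> B = cball c r" and "B \<subseteq> X"
    and "setdist B w \<ge> \<beta> * diameter B"
    and "\<beta> \<ge> 4 * \<tau>\<^sup>2 / \<epsilon>"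
  shows "\<forall>q\<in>w. \<forall>p\<in>B. \<forall>p'\<in>B.
           \<bar>bregman F gradF q p - bregman F gradF q p'\<bar> / bregman F gradF q p \<le> \<epsilon>"
proof (intro ballI)
  fix q p p' assume "q \<in> w" "p \<in> B" "p' \<in> B"
  have "convex_on X F" using assms(3) by (rule strictly_convex_on_imp_convex_on)
  have "convex B" "bounded B" using assms(9) by auto
  then have "closed_segment p p' \<subseteq> B" using \<open>p \<in> B\<close> \<open>p' \<in> B\<close> by (simp add: closed_segment_subset)
  have "4 * \<tau>\<^sup>2 \<le> \<beta> * \<epsilon>" using assms(12) by (simp add: pos_divide_le_eq[OF assms(6)])
  then have "0 \<le> \<beta>" using assms(6) by (smt (verit) zero_le_mult_iff zero_le_power2)
  have sep: "4 * \<tau>\<^sup>2 * norm (p' - p) \<le> \<epsilon> * norm (q - x)" if "x \<in> closed_segment p p'" for x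
  proof -
    have "\<beta> * norm (p' - p) \<le> norm (q - x)"
      using scaled_dist_le_dist_of_setdist[of B p p' x q w \<beta>] that \<open>closed_segment p p' \<subseteq> B\<close>
        \<open>bounded B\<close> \<open>p \<in> B\<close> \<open>p' \<in> B\<close> \<open>q \<in> w\<close> \<open>0 \<le> \<beta>\<close> assms(11)
      by (auto simp: dist_norm norm_minus_commute)
    then have "\<epsilon> * (\<beta> * norm (p' - p)) \<le> \<epsilon> * norm (q - x)" using assms(6) by simp
    moreover have "4 * \<tau>\<^sup>2 * norm (p' - p) \<le> \<beta> * \<epsilon> * norm (p' - p)"
      using \<open>4 * \<tau>\<^sup>2 \<le> \<beta> * \<epsilon>\<close> by (rule mult_right_mono) simp
    ultimately show ?thesis by (simp add: ac_simps)
  qed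
  have "\<bar>bregman F gradF q p - bregman F gradF q p'\<bar> \<le> \<epsilon> * bregman F gradF q p"
    using \<open>closed_segment p p' \<subseteq> B\<close> \<open>q \<in> w\<close> assms(6-8,10) sep
    by (intro bregman_relative_change_on_segment[OF \<open>convex_on X F\<close> assms(1,4,5)]) auto
  moreover have "0 \<le> bregman F gradF q p"
    using assms(4,8,10) \<open>p \<in> B\<close> \<open>q \<in> w\<close> unfolding twice_diff_grad_hess_def
    by (intro bregman_nonneg[OF \<open>convex_on X F\<close> assms(1)]) auto
  ultimately show "\<bar>bregman F gradF q p - bregman F gradF q p'\<bar> / bregman F gradF q p \<le> \<epsilon>"
    using assms(6) by (cases "bregman F gradF q p = 0") (simp_all add: divide_le_eq mult.commute)
qed

end
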